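(* Let $k,\ell \in \mathbb{N}$, and let $G$ be any ordered graph. If $G$ contains no $k$-structure of Type 1, no $k$-structure of Type 2, and no $(k,\ell)$-structure of Type 3, then the vertices of $G$ may be partitioned into blocks $B_1 < \ldots < B_m$ of consecutive vertices, with $m \leqslant 256k^4$ and each block $\ell$-homogeneous.
   Context: An ordered graph of order $n$ has vertex set $[n]$ with the natural order; $\Gamma(x)$ is the neighbourhood of $x$. For sets $A,B$ of vertices, $A<B$ means $a<b$ for all $a\in A$, $b\in B$. For a vertex $x$ and $\ell\in\mathbb{N}$, $N_\ell(x)=\{z\in\mathbb{N}: x-\ell+1\leqslant z\leqslant x+\ell-1\}$. Vertices $x,y$ are $\ell$-homogeneous if $\Gamma(x)\setminus(N_\ell(x)\cup N_\ell(y))=\Gamma(y)\setminus(N_\ell(x)\cup N_\ell(y))$; a set $B$ of consecutive vertices is $\ell$-homogeneous if every two of its vertices are $\ell$-homogeneous. Structures in $G$: a $k$-structure of Type 1 consists of vertices $y$ and $x_1<\dots<x_{2k}$ with $y<x_1$ or $y>x_{2k}$, such that for $1\leqslant i<2k$, $yx_i\in E(G)$ iff $yx_{i+1}\notin E(G)$. A $k$-structure of Type 2(a) consists of vertices $x_1<\dots<x_{2k}<y_1<\dots<y_{2k}$ such that for $1\leqslant i<2k$, $x_iy_i\in E(G)$ iff $x_{i+1}y_{i+1}\notin E(G)$; Type 2(b) is the same but with $x_1<\dots<x_{2k}<y_{2k}<\dots<y_1$; a $k$-structure of Type 2 is one of Type 2(a) or 2(b). A $(k,\ell)$-structure of Type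 3 consists of vertices $x_1<z_{1,1}<\dots<z_{1,\ell-1}<y_1<x_2<z_{2,1}<\dots<z_{2,\ell-1}<y_2<x_3<\dots<y_{2k-1}<x_{2k}<z_{2k,1}<\dots<z_{2k,\ell-1}<y_{2k}$ such that for $1\leqslant i<2k$, $x_iy_i\in E(G)$ iff $x_{i+1}y_{i+1}\notin E(G)$. *)

theory Defs
  imports Main
begin

definition ordered_graph :: "nat \<Rightarrow> (nat \<Rightarrow> nat \<Rightarrow> bool) \<Rightarrow> bool" where
  "ordered_graph n E \<longleftrightarrow> (\<forall>u v. E u v \<longrightarrow> E v u) \<and> (\<forall>u. \<not> E u u)
     \<and> (\<forall>u v. E u v \<longrightarrow> u \<in> {1..n} \<and> v \<in> {1..n})"

definition nbhd :: "nat \<Rightarrow> (nat \<Rightarrow> nat \<Rightarrow> bool) \<Rightarrow> nat \<Rightarrow> nat set" where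
  "nbhd n E x = {z \<in> {1..n}. E x z}"

text \<open>N_l(x) = {z. x - l + 1 \<le> z \<le> x + l - 1}, written without truncated subtraction.\<close>
definition Nl :: "nat \<Rightarrow> nat \<Rightarrow> nat set" where
  "Nl l x = {z. x + 1 \<le> z + l \<and> z + 1 \<le> x + l}"

definition set_less :: "nat set \<Rightarrow> nat set \<Rightarrow> bool" where
  "set_less A B \<longleftrightarrow> (\<forall>a\<in>A. \<forall>b\<in>B. a < b)"

definition l_homogeneous_pair :: "nat \<Rightarrow> (nat \<Rightarrow> nat \<Rightarrow> bool) \<Rightarrow> nat \<Rightarrow> nat \<Rightarrow> nat \<Rightarrow> bool" where
  "l_homogeneous_pair n E l x y \<longleftrightarrow>
     nbhd n E x - (Nl l x \<union> Nl l y) = nbhd n E y - (Nl l x \<union> Nl l y)"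

definition consecutive :: "nat set \<Rightarrow> bool" where
  "consecutive B \<longleftrightarrow> (\<exists>a b. B = {a..b})"

definition l_homogeneous_set :: "nat \<Rightarrow> (nat \<Rightarrow> nat \<Rightarrow> bool) \<Rightarrow> nat \<Rightarrow> nat set \<Rightarrow> bool" where
  "l_homogeneous_set n E l B \<longleftrightarrow> consecutive B \<and> (\<forall>x\<in>B. \<forall>y\<in>B. l_homogeneous_pair n E l x y)"

text \<open>Sequences x_1 < ... < x_{2k} are functions on indices 1..2k.\<close>
definition incr_seq :: "nat \<Rightarrow> (nat \<Rightarrow> nat) \<Rightarrow> bool" where
  "incr_seq k x \<longleftrightarrow> (\<forall>i. 1 \<le> i \<and> i < 2*k \<longrightarrow> x i < x (i+1))"

definition in_vertices :: "nat \<Rightarrow> nat \<Rightarrow> (nat \<Rightarrow> nat) \<Rightarrow> bool" where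
  "in_vertices n k x \<longleftrightarrow> (\<forall>i\<in>{1..2*k}. x i \<in> {1..n})"

definition has_type1 :: "nat \<Rightarrow> (nat \<Rightarrow> nat \<Rightarrow> bool) \<Rightarrow> nat \<Rightarrow> bool" where
  "has_type1 n E k \<longleftrightarrow> (\<exists>y x. y \<in> {1..n} \<and> in_vertices n k x \<and> incr_seq k x
     \<and> (y < x 1 \<or> y > x (2*k))
     \<and> (\<forall>i. 1 \<le> i \<and> i < 2*k \<longrightarrow> (E y (x i) \<longleftrightarrow> \<not> E y (x (i+1)))))"

definition has_type2a :: "nat \<Rightarrow> (nat \<Rightarrow> nat \<Rightarrow> bool) \<Rightarrow> nat \<Rightarrow> bool" where
  "has_type2a n E k \<longleftrightarrow> (\<exists>x y. in_vertices n k x \<and> in_vertices n k y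
     \<and> incr_seq k x \<and> x (2*k) < y 1 \<and> incr_seq k y
     \<and> (\<forall>i. 1 \<le> i \<and> i < 2*k \<longrightarrow> (E (x i) (y i) \<longleftrightarrow> \<not> E (x (i+1)) (y (i+1)))))"

definition has_type2b :: "nat \<Rightarrow> (nat \<Rightarrow> nat \<Rightarrow> bool) \<Rightarrow> nat \<Rightarrow> bool" where
  "has_type2b n E k \<longleftrightarrow> (\<exists>x y. in_vertices n k x \<and> in_vertices n k y
     \<and> incr_seq k x \<and> x (2*k) < y (2*k) \<and> (\<forall>i. 1 \<le> i \<and> i < 2*k \<longrightarrow> y (i+1) < y i)
     \<and> (\<forall>i. 1 \<le> i \<and> i < 2*k \<longrightarrow> (E (x i) (y i) \<longleftrightarrow> \<not> E (x (i+1)) (y (i+1)))))"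

definition has_type2 :: "nat \<Rightarrow> (nat \<Rightarrow> nat \<Rightarrow> bool) \<Rightarrow> nat \<Rightarrow> bool" where
  "has_type2 n E k \<longleftrightarrow> has_type2a n E k \<or> has_type2b n E k"

definition has_type3 :: "nat \<Rightarrow> (nat \<Rightarrow> nat \<Rightarrow> bool) \<Rightarrow> nat \<Rightarrow> nat \<Rightarrow> bool" where
  "has_type3 n E k l \<longleftrightarrow> (\<exists>x y z. in_vertices n k x \<and> in_vertices n k y
     \<and> (\<forall>i\<in>{1..2*k}. x i < y i
          \<and> (\<forall>j\<in>{1..<l}. z i j \<in> {1..n} \<and> x i < z i j \<and> z i j < y i
                \<and> (j + 1 < l \<longrightarrow> z i j < z i (j+1))))
     \<and> (\<forall>i. 1 \<le> i \<and> i < 2*k \<longrightarrow> y i < x (i+1))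
     \<and> (\<forall>i. 1 \<le> i \<and> i < 2*k \<longrightarrow> (E (x i) (y i) \<longleftrightarrow> \<not> E (x (i+1)) (y (i+1)))))"

end

theory Submission
  imports Defs
begin

(*
Sweep the vertices from left to right, extending the current block while it stays
l-homogeneous. Whenever a new block {y, ...} is opened, some x in the previous block is not
l-homogeneous with y, i.e. some vertex z far from both has E z x \<noteq> E z y. So m blocks
produce m - 1 such witnesses (x, y, z) with ordered intervals [x, y], and the witnesses of
equal index parity have pairwise disjoint intervals.

Among 2k disjoint witnesses with z inside [x, y], taking from each the pair {z, x} or {z, y}
with the prescribed adjacency gives a Type 3 structure. For witnesses with z outside, an
Erdos-Szekeres argument on the positions of the z's finds 2k of them with a common z
(Type 1), 2k with z decreasing (Type 2), or 4k^2 with z increasing; cutting the latter into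
2k blocks of 2k consecutive witnesses, either some block has all its z's beyond the whole
block (Type 2) or the first witnesses of the blocks are interleaved disjointly (Type 3).
Hence each parity class has at most 2k + 32k^4 witnesses, and m \<le> 256k^4.
*)

definition longest_chain_ending ::
    "('a::linorder \<Rightarrow> 'b) \<Rightarrow> ('b \<Rightarrow> 'b \<Rightarrow> bool) \<Rightarrow> 'a set \<Rightarrow> 'a \<Rightarrow> nat" where
  "longest_chain_ending f ord T i =
     Max (card ` {C. C \<subseteq> T \<inter> {..i} \<and> i \<in> C \<and> monotone_on C (<) ord f})"

lemma longest_chain_ending_attained:
  assumes "finite T" "i \<in> T"
  obtains C where "C \<subseteq> T \<inter> {..i}" "i \<in> C" "monotone_on C (<) ord f"
    "card C = longest_chain_ending f ord T i"
proof -
  let ?S = "{C. C \<subseteq> T \<inter> {..i} \<and> i \<in> C \<and> monotone_on C (<) ord f}"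
  have "?S \<subseteq> Pow T" by auto
  then have "finite ?S" using assms(1) by (meson finite_Pow_iff finite_subset)
  moreover have "{i} \<in> ?S" using assms(2) by (auto intro: monotone_onI)
  ultimately have "longest_chain_ending f ord T i \<in> card ` ?S"
    unfolding longest_chain_ending_def by (intro Max_in) auto
  then show thesis using that by auto
qed

lemma longest_chain_ending_ge:
  assumes "finite T" "C \<subseteq> T \<inter> {..i}" "i \<in> C" "monotone_on C (<) ord f"
  shows "card C \<le> longest_chain_ending f ord T i"
  unfolding longest_chain_ending_def
  using assms by (intro Max_ge) (auto intro: finite_subset[of _ "Pow T"])

lemma longest_chain_ending_strict_mono:
  assumes "finite T" "i \<in> T" "j \<in> T" "i < j" "ord (f i) (f j)" "transp ord"
  shows "longest_chain_ending f ord T i < longest_chain_ending f ord T j"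
proof -
  obtain C where C: "C \<subseteq> T \<inter> {..i}" "i \<in> C" "monotone_on C (<) ord f"
    and card_C: "card C = longest_chain_ending f ord T i"
    using longest_chain_ending_attained[OF assms(1,2)] .
  have "monotone_on (insert j C) (<) ord f"
  proof (rule monotone_onI)
    fix x y assume "x \<in> insert j C" "y \<in> insert j C" "x < y"
    with C assms(4) consider "x \<in> C" "y \<in> C" | "x = i" "y = j" | "x \<in> C" "x < i" "y = j"
      by fastforce
    then show "ord (f x) (f y)"
      by cases (use \<open>x < y\<close> C(2,3) assms(5,6) in \<open>auto dest: monotone_onD transpD\<close>)
  qed
  then have "card (insert j C) \<le> longest_chain_ending f ord T j"
    using C assms(1,3,4) by (intro longest_chain_ending_ge) auto
  moreover have "finite C" "j \<notin> C" using C assms(1,4) finite_subset by fastforce+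
  ultimately show ?thesis using card_C by simp
qed

lemma longest_chain_ending_bounds:
  assumes "finite T" "i \<in> T" "\<And>C. C \<subseteq> T \<Longrightarrow> monotone_on C (<) ord f \<Longrightarrow> card C \<le> b"
  shows "longest_chain_ending f ord T i \<in> {1..b}"
proof -
  obtain C where "C \<subseteq> T \<inter> {..i}" "monotone_on C (<) ord f"
    "card C = longest_chain_ending f ord T i"
    using longest_chain_ending_attained[OF assms(1,2)] by metis
  then have "longest_chain_ending f ord T i \<le> b" using assms(3) by (metis le_inf_iff)
  moreover have "card {i} \<le> longest_chain_ending f ord T i"
    using assms(1,2) by (intro longest_chain_ending_ge) (auto intro: monotone_onI)
  ultimately show ?thesis by simp
qed

text \<open>Erdos--Szekeres, by labelling each element with the lengths of the longest increasing
  and decreasing chains ending at it.\<close>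

theorem card_le_by_monotone_subsets:
  fixes f :: "'a::linorder \<Rightarrow> 'b::linorder"
  assumes "finite T"
    and const: "\<And>C. C \<subseteq> T \<Longrightarrow> (\<forall>i\<in>C. \<forall>j\<in>C. f i = f j) \<Longrightarrow> card C \<le> a"
    and incr: "\<And>C. C \<subseteq> T \<Longrightarrow> strict_mono_on C f \<Longrightarrow> card C \<le> b"
    and decr: "\<And>C. C \<subseteq> T \<Longrightarrow> strict_antimono_on C f \<Longrightarrow> card C \<le> d"
  shows "card T \<le> a * b * d"
proof -
  define g where "g i = (longest_chain_ending f (<) T i, longest_chain_ending f (\<lambda>x y. y < x) T i)"
    for i
  have g_range: "g ` T \<subseteq> {1..b} \<times> {1..d}"
    unfolding g_def using longest_chain_ending_bounds[OF assms(1) _ incr]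
      longest_chain_ending_bounds[OF assms(1) _ decr] by blast
  have "f i = f j" if "i \<in> T" "j \<in> T" "i < j" "g i = g j" for i j
  proof (rule ccontr)
    assume "f i \<noteq> f j"
    then consider "f i < f j" | "f j < f i" by (meson linorder_neqE)
    then show False
    proof cases
      case 1
      then have "longest_chain_ending f (<) T i < longest_chain_ending f (<) T j"
        using that assms(1) by (intro longest_chain_ending_strict_mono) (auto simp: transp_def)
      then show False using that(4) by (simp add: g_def)
    next
      case 2
      then have "longest_chain_ending f (\<lambda>x y. y < x) T i
          < longest_chain_ending f (\<lambda>x y. y < x) T j"
        using that assms(1) by (intro longest_chain_ending_strict_mono) (auto simp: transp_def)
      then show False using that(4) by (simp add: g_def)
    qed
  qed
  then have fibre: "card {i \<in> T. g i = p} \<le> a" for p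
    by (intro const) (auto, metis linorder_neqE)
  have "T = (\<Union>p\<in>g ` T. {i \<in> T. g i = p})" by blast
  then have "card T \<le> (\<Sum>p\<in>g ` T. card {i \<in> T. g i = p})"
    using assms(1) by (metis card_UN_le finite_imageI)
  also have "\<dots> \<le> (\<Sum>p\<in>g ` T. a)"
    by (rule sum_mono) (rule fibre)
  also have "\<dots> = card (g ` T) * a" by simp
  also have "\<dots> \<le> b * d * a"
    using card_mono[OF _ g_range] by simp
  finally show ?thesis by (simp add: mult.commute mult.left_commute)
qed

lemma has_type1I:
  assumes "y \<in> {1..n}" "\<forall>i\<in>{1..2*k}. xs i \<in> {1..n} \<and> (E y (xs i) \<longleftrightarrow> odd i)"
    and "\<forall>i\<in>{1..<2*k}. xs i < xs (i+1)" and "y < xs 1 \<or> xs (2*k) < y"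
  shows "has_type1 n E k"
  unfolding has_type1_def in_vertices_def incr_seq_def
  by (rule exI[of _ y], rule exI[of _ xs]) (use assms in auto)

lemma has_type2aI:
  assumes "\<forall>i\<in>{1..2*k}. xs i \<in> {1..n} \<and> ys i \<in> {1..n} \<and> (E (xs i) (ys i) \<longleftrightarrow> odd i)"
    and "\<forall>i\<in>{1..<2*k}. xs i < xs (i+1) \<and> ys i < ys (i+1)" and "xs (2*k) < ys 1"
  shows "has_type2 n E k"
  unfolding has_type2_def has_type2a_def in_vertices_def incr_seq_def
  by (rule disjI1, rule exI[of _ xs], rule exI[of _ ys]) (use assms in auto)

lemma has_type2bI:
  assumes "\<forall>i\<in>{1..2*k}. xs i \<in> {1..n} \<and> ys i \<in> {1..n} \<and> (E (xs i) (ys i) \<longleftrightarrow> odd i)"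
    and "\<forall>i\<in>{1..<2*k}. xs i < xs (i+1) \<and> ys (i+1) < ys i" and "xs (2*k) < ys (2*k)"
  shows "has_type2 n E k"
  unfolding has_type2_def has_type2b_def in_vertices_def incr_seq_def
  by (rule disjI2, rule exI[of _ xs], rule exI[of _ ys]) (use assms in auto)

lemma has_type3I:
  assumes "1 \<le> l"
    and "\<forall>i\<in>{1..2*k}. 1 \<le> xs i \<and> xs i + l \<le> ys i \<and> ys i \<le> n \<and> (E (xs i) (ys i) \<longleftrightarrow> odd i)"
    and "\<forall>i\<in>{1..<2*k}. ys i < xs (i+1)"
  shows "has_type3 n E k l"
  unfolding has_type3_def in_vertices_def
  by (rule exI[of _ xs], rule exI[of _ ys], rule exI[of _ "\<lambda>i j. xs i + j"]) (use assms in auto)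

lemma block_index_mem:
  fixes b t i m :: nat
  assumes "t \<in> {1..m}" "i \<in> {1..b}"
  shows "b * (t - 1) + i \<in> {1..b * m}"
proof -
  have "b * (t - 1) + i \<le> b * t"
    using assms by (cases t) auto
  also have "\<dots> \<le> b * m" using assms by simp
  finally show ?thesis using assms by simp
qed

lemma strict_mono_on_Suc:
  fixes N :: nat
  assumes "strict_mono_on {1..N} f" "i \<in> {1..<N}"
  shows "f i < f (i+1)"
  using assms(2) by (intro strict_mono_onD[OF assms(1)]) auto

lemma strict_antimono_on_Suc:
  fixes N :: nat
  assumes "strict_antimono_on {1..N} f" "i \<in> {1..<N}"
  shows "f (i+1) < f i"
  using assms(2) by (intro monotone_onD[OF assms(1)]) auto

lemma strict_antimono_on_leD:
  fixes f :: "'a::order \<Rightarrow> 'b::order"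
  assumes "strict_antimono_on A f" "x \<in> A" "y \<in> A" "x \<le> y"
  shows "f y \<le> f x"
proof (cases "x = y")
  case False
  with assms(4) have "x < y" by simp
  then show ?thesis using monotone_onD[OF assms(1-3)] by simp
qed simp

lemma obtain_strict_mono_enumeration:
  fixes C :: "'a::linorder set"
  assumes "finite C" "N \<le> card C"
  obtains c :: "nat \<Rightarrow> 'a" where "strict_mono_on {1..N} c" "c ` {1..N} \<subseteq> C"
proof
  let ?L = "sorted_list_of_set C"
  have len: "length ?L = card C" and set: "set ?L = C" and sorted: "sorted_wrt (<) ?L"
    using assms(1) by simp_all
  show "strict_mono_on {1..N} (\<lambda>i. ?L ! (i - 1))"
  proof (rule strict_mono_onI)
    fix i j assume "i \<in> {1..N}" "j \<in> {1..N}" "i < j"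
    then have "i - 1 < j - 1" "j - 1 < length ?L" using assms(2) len by auto
    then show "?L ! (i - 1) < ?L ! (j - 1)" by (rule sorted_wrt_nth_less[OF sorted])
  qed
  show "(\<lambda>i. ?L ! (i - 1)) ` {1..N} \<subseteq> C"
  proof
    fix x assume "x \<in> (\<lambda>i. ?L ! (i - 1)) ` {1..N}"
    then obtain i where "i \<in> {1..N}" "x = ?L ! (i - 1)" by blast
    then show "x \<in> C" using assms(2) len set nth_mem[of "i - 1" ?L] by auto
  qed
qed

lemma l_homogeneous_pair_refl: "l_homogeneous_pair n E l x x"
  unfolding l_homogeneous_pair_def by simp

lemma l_homogeneous_pair_sym: "l_homogeneous_pair n E l x y \<longleftrightarrow> l_homogeneous_pair n E l y x"
  unfolding l_homogeneous_pair_def by (metis Un_commute)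

locale ordered_graph_scale =
  fixes n :: nat and E :: "nat \<Rightarrow> nat \<Rightarrow> bool" and l :: nat
  assumes graph: "ordered_graph n E" and l_pos: "1 \<le> l"
begin

lemma E_commute: "E u v = E v u"
  using graph unfolding ordered_graph_def by blast

definition distinguishes :: "nat \<Rightarrow> nat \<Rightarrow> nat \<Rightarrow> bool" where
  "distinguishes z x y \<longleftrightarrow> 1 \<le> x \<and> x < y \<and> y \<le> n \<and> z \<in> {1..n}
     \<and> (z + l \<le> x \<or> x + l \<le> z) \<and> (z + l \<le> y \<or> y + l \<le> z) \<and> E z x \<noteq> E z y"

lemma distinguishes_if_not_homogeneous:
  assumes "\<not> l_homogeneous_pair n E l x y" "1 \<le> x" "x < y" "y \<le> n"
  obtains z where "distinguishes z x y"
proof -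
  obtain z where "z \<in> nbhd n E x - (Nl l x \<union> Nl l y) \<longleftrightarrow> z \<notin> nbhd n E y - (Nl l x \<union> Nl l y)"
    using assms(1) unfolding l_homogeneous_pair_def by blast
  then have "distinguishes z x y"
    using assms(2-4) E_commute[of x z] E_commute[of y z]
    unfolding distinguishes_def nbhd_def Nl_def by auto
  then show thesis by (rule that)
qed

text \<open>The endpoint of the witness that \<open>z\<close> sees with adjacency \<open>b\<close>; choosing \<open>b\<close> by
  the parity of the index makes the resulting pairs alternate.\<close>

definition pick :: "nat \<Rightarrow> nat \<Rightarrow> nat \<Rightarrow> bool \<Rightarrow> nat" where
  "pick z x y b = (if E z x = b then x else y)"

lemma distinguishes_pick:
  assumes "distinguishes z x y"
  shows "E z (pick z x y b) = b" "x \<le> pick z x y b" "pick z x y b \<le> y"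
    "pick z x y b \<in> {1..n}" "z \<in> {1..n}"
  using assms unfolding distinguishes_def pick_def by auto

lemma distinguishes_pick_pair:
  fixes b :: bool
  assumes "distinguishes z x y"
  defines "p \<equiv> pick z x y b"
  shows "1 \<le> min p z" "min p z + l \<le> max p z" "max p z \<le> n" "E (min p z) (max p z) = b"
  using assms E_commute[of p z] unfolding distinguishes_def pick_def by auto

lemma distinguishes_neq:
  assumes "distinguishes z x y"
  shows "z \<noteq> x" "z \<noteq> y"
  using assms l_pos unfolding distinguishes_def by auto

definition separated_witnesses ::
    "(nat \<Rightarrow> nat) \<Rightarrow> (nat \<Rightarrow> nat) \<Rightarrow> (nat \<Rightarrow> nat) \<Rightarrow> nat set \<Rightarrow> bool" where
  "separated_witnesses X Y Z I \<longleftrightarrow> (\<forall>i\<in>I. distinguishes (Z i) (X i) (Y i))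
     \<and> (\<forall>i\<in>I. \<forall>j\<in>I. i < j \<longrightarrow> Y i < X j)"

lemma separated_witnesses_subset:
  "separated_witnesses X Y Z I \<Longrightarrow> J \<subseteq> I \<Longrightarrow> separated_witnesses X Y Z J"
  unfolding separated_witnesses_def by blast

lemma separated_witnesses_comp:
  assumes "separated_witnesses X Y Z I" "strict_mono_on J c" "c ` J \<subseteq> I"
  shows "separated_witnesses (X \<circ> c) (Y \<circ> c) (Z \<circ> c) J"
  unfolding separated_witnesses_def
proof (intro conjI ballI impI)
  fix i assume "i \<in> J"
  then show "distinguishes ((Z \<circ> c) i) ((X \<circ> c) i) ((Y \<circ> c) i)"
    using assms(1,3) unfolding separated_witnesses_def by auto
next
  fix i j assume "i \<in> J" "j \<in> J" "i < j"
  then have "c i \<in> I" "c j \<in> I" "c i < c j" using assms(2,3) strict_mono_onD by auto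
  then show "(Y \<circ> c) i < (X \<circ> c) j" using assms(1) unfolding separated_witnesses_def by simp
qed

lemma separated_witnessesD:
  assumes "separated_witnesses X Y Z I" "i \<in> I"
  shows "distinguishes (Z i) (X i) (Y i)" "X i < Y i"
  using assms unfolding separated_witnesses_def distinguishes_def by auto

lemma separated_witnesses_less:
  "separated_witnesses X Y Z I \<Longrightarrow> i \<in> I \<Longrightarrow> j \<in> I \<Longrightarrow> i < j \<Longrightarrow> Y i < X j"
  unfolding separated_witnesses_def by blast

lemma separated_witnesses_pick:
  assumes "separated_witnesses X Y Z I" "i \<in> I"
  shows "pick (Z i) (X i) (Y i) b \<in> {1..n}" "Z i \<in> {1..n}"
    "E (pick (Z i) (X i) (Y i) b) (Z i) = b" "E (Z i) (pick (Z i) (X i) (Y i) b) = b"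
    "X i \<le> pick (Z i) (X i) (Y i) b" "pick (Z i) (X i) (Y i) b \<le> Y i"
  using distinguishes_pick[OF separated_witnessesD(1)[OF assms]] E_commute by simp_all

lemma separated_witnesses_pick_less:
  assumes "separated_witnesses X Y Z I" "i \<in> I" "j \<in> I" "i < j"
  shows "pick (Z i) (X i) (Y i) b < pick (Z j) (X j) (Y j) b'"
  using separated_witnesses_pick(5,6) separated_witnesses_less assms by (meson le_less_trans less_le_trans)

lemma obtain_separated_subchain:
  assumes "separated_witnesses X Y Z T" "C \<subseteq> T" "finite C" "N \<le> card C"
  obtains c where "strict_mono_on {1..N} c" "c ` {1..N} \<subseteq> C"
    "separated_witnesses (X \<circ> c) (Y \<circ> c) (Z \<circ> c) {1..N}"
proof -
  obtain c where c: "strict_mono_on {1..N} c" "c ` {1..N} \<subseteq> C"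
    using obtain_strict_mono_enumeration[OF assms(3,4)] .
  have "separated_witnesses X Y Z C"
    using separated_witnesses_subset[OF assms(1,2)] .
  from separated_witnesses_comp[OF this c] show thesis by (rule that[OF c])
qed

definition ordered_homogeneous_partition :: "nat \<Rightarrow> nat \<Rightarrow> (nat \<Rightarrow> nat set) \<Rightarrow> bool" where
  "ordered_homogeneous_partition t m B \<longleftrightarrow>
     (\<forall>i\<in>{1..m}. B i \<noteq> {} \<and> l_homogeneous_set n E l (B i))
     \<and> (\<forall>i\<in>{1..m}. \<forall>j\<in>{1..m}. i < j \<longrightarrow> set_less (B i) (B j))
     \<and> (\<Union>i\<in>{1..m}. B i) = {1..t}"

lemma ordered_homogeneous_partitionD:
  assumes "ordered_homogeneous_partition t m B"
  shows "\<forall>i\<in>{1..m}. B i \<noteq> {} \<and> l_homogeneous_set n E l (B i)"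
    "\<forall>i\<in>{1..m}. \<forall>j\<in>{1..m}. i < j \<longrightarrow> set_less (B i) (B j)"
    "(\<Union>i\<in>{1..m}. B i) = {1..t}"
  using assms unfolding ordered_homogeneous_partition_def by simp_all

lemma ordered_homogeneous_partition_last:
  assumes part: "ordered_homogeneous_partition t m B" and m: "0 < m"
  obtains a where "a \<le> t" "B m = {a..t}"
proof -
  note old = ordered_homogeneous_partitionD[OF part]
  have m_mem: "m \<in> {1..m}" using m by simp
  have "B m \<noteq> {}" "consecutive (B m)"
    using bspec[OF old(1) m_mem] unfolding l_homogeneous_set_def by simp_all
  then obtain a b where ab: "B m = {a..b}" "a \<le> b" unfolding consecutive_def by force
  have "B m \<subseteq> {1..t}" using old(3) m_mem by blast
  then have "1 \<le> a" "b \<le> t" using ab by auto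
  then have "t \<in> (\<Union>i\<in>{1..m}. B i)" using old(3) ab(2) by simp
  then obtain i where i: "i \<in> {1..m}" "t \<in> B i" by blast
  have "b = t"
  proof (cases "i = m")
    case False
    then have "set_less (B i) (B m)" using old(2) i(1) m_mem by simp
    then have "t < b" using i(2) ab unfolding set_less_def by simp
    with \<open>b \<le> t\<close> show ?thesis by simp
  qed (use i(2) ab \<open>b \<le> t\<close> in simp)
  then show thesis using that ab by simp
qed

lemma ordered_homogeneous_partition_extend:
  assumes part: "ordered_homogeneous_partition t m B" and m: "0 < m"
    and hom: "\<forall>x\<in>B m. l_homogeneous_pair n E l x (t+1)"
  shows "ordered_homogeneous_partition (t+1) m (B(m := insert (t+1) (B m)))"
    (is "ordered_homogeneous_partition _ _ ?B'")
proof -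
  obtain a where a: "a \<le> t" "B m = {a..t}" using ordered_homogeneous_partition_last[OF part m] .
  have m_mem: "m \<in> {1..m}" using m by simp
  note old = ordered_homogeneous_partitionD[OF part]
  have new_block: "insert (t+1) (B m) = {a..t+1}" using a by auto
  have "consecutive {a..t+1}" unfolding consecutive_def by blast
  moreover have "\<forall>x\<in>{a..t+1}. \<forall>y\<in>{a..t+1}. l_homogeneous_pair n E l x y"
  proof (intro ballI)
    fix x y assume "x \<in> {a..t+1}" "y \<in> {a..t+1}"
    then consider "x \<in> B m" "y \<in> B m" | "x = t+1" "y \<in> B m" | "x \<in> B m" "y = t+1" | "x = t+1" "y = t+1"
      using a by fastforce
    then show "l_homogeneous_pair n E l x y"
    proof cases
      case 1
      then show ?thesis using bspec[OF old(1) m_mem] unfolding l_homogeneous_set_def by simp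
    qed (use hom l_homogeneous_pair_sym l_homogeneous_pair_refl in auto)
  qed
  ultimately have hom_new: "l_homogeneous_set n E l (insert (t+1) (B m))"
    unfolding l_homogeneous_set_def new_block by blast
  have less_new: "set_less (B i) (insert (t+1) (B m))" if "i \<in> {1..m}" "i < m" for i
  proof -
    have "set_less (B i) {a..t}" using old(2)[rule_format, OF that(1) m_mem that(2)] a(2) by simp
    then have "x < a" if "x \<in> B i" for x using a(1) that unfolding set_less_def by auto
    then show ?thesis unfolding set_less_def new_block by fastforce
  qed
  have "(\<Union>i\<in>{1..m}. ?B' i) = insert (t+1) (\<Union>i\<in>{1..m}. B i)"
    using m_mem by (auto split: if_splits)
  also have "\<dots> = {1..t+1}" using old(3) by auto
  finally have union: "(\<Union>i\<in>{1..m}. ?B' i) = {1..t+1}" .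
  show ?thesis
    unfolding ordered_homogeneous_partition_def
  proof (intro conjI ballI impI union)
    fix i assume "i \<in> {1..m}"
    then show "?B' i \<noteq> {}" "l_homogeneous_set n E l (?B' i)"
      using old(1) hom_new by (cases "i = m"; simp)+
  next
    fix i j assume "i \<in> {1..m}" "j \<in> {1..m}" "i < j"
    then show "set_less (?B' i) (?B' j)" using old(2) less_new by (cases "j = m") auto
  qed
qed

lemma ordered_homogeneous_partition_snoc:
  assumes part: "ordered_homogeneous_partition t m B"
  shows "ordered_homogeneous_partition (t+1) (m+1) (B(m+1 := {t+1}))"
    (is "ordered_homogeneous_partition _ _ ?B'")
proof -
  note old = ordered_homogeneous_partitionD[OF part]
  have "consecutive {t+1}" unfolding consecutive_def by (intro exI[of _ "t+1"]) simp
  then have hom_new: "l_homogeneous_set n E l {t+1}"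
    unfolding l_homogeneous_set_def using l_homogeneous_pair_refl by simp
  have less_new: "set_less (B i) {t+1}" if "i \<in> {1..m}" for i
  proof -
    have "B i \<subseteq> {1..t}" using old(3) that by blast
    then show ?thesis unfolding set_less_def by auto
  qed
  have indices: "{1..m+1} = insert (m+1) {1..m}" by auto
  have "(\<Union>i\<in>{1..m+1}. ?B' i) = {t+1} \<union> (\<Union>i\<in>{1..m}. B i)"
    unfolding indices by (auto split: if_splits)
  also have "\<dots> = {1..t+1}" using old(3) by auto
  finally have union: "(\<Union>i\<in>{1..m+1}. ?B' i) = {1..t+1}" .
  show ?thesis
    unfolding ordered_homogeneous_partition_def
  proof (intro conjI ballI impI union)
    fix i assume "i \<in> {1..m+1}"
    then show "?B' i \<noteq> {}" "l_homogeneous_set n E l (?B' i)"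
      using old(1) hom_new by (cases "i = m+1"; simp)+
  next
    fix i j assume "i \<in> {1..m+1}" "j \<in> {1..m+1}" "i < j"
    then show "set_less (?B' i) (?B' j)" using old(2) less_new by (cases "j = m+1") auto
  qed
qed

lemma ordered_homogeneous_partition_exists:
  assumes "t \<le> n"
  shows "\<exists>m B X Y Z. ordered_homogeneous_partition t m B
    \<and> (\<forall>i\<in>{1..<m}. distinguishes (Z i) (X i) (Y i) \<and> X i \<in> B i \<and> Y i \<in> B (i+1))"
  using assms
proof (induction t)
  case 0
  show ?case
    by (rule exI[of _ 0], rule exI[of _ "\<lambda>_. {}"]) (simp add: ordered_homogeneous_partition_def)
next
  case (Suc t)
  then obtain m B X Y Z where part: "ordered_homogeneous_partition t m B"
    and wit: "\<forall>i\<in>{1..<m}. distinguishes (Z i) (X i) (Y i) \<and> X i \<in> B i \<and> Y i \<in> B (i+1)"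
    by auto
  show ?case
  proof (cases "0 < m \<and> (\<forall>x\<in>B m. l_homogeneous_pair n E l x (t+1))")
    case True
    let ?B = "B(m := insert (t+1) (B m))"
    have "ordered_homogeneous_partition (Suc t) m ?B"
      using ordered_homogeneous_partition_extend[OF part] True by simp
    moreover have "\<forall>i\<in>{1..<m}. distinguishes (Z i) (X i) (Y i) \<and> X i \<in> ?B i \<and> Y i \<in> ?B (i+1)"
      using wit by auto
    ultimately show ?thesis by blast
  next
    case False
    obtain x z where xz: "0 < m \<Longrightarrow> x \<in> B m \<and> distinguishes z x (t+1)"
    proof (cases "0 < m")
      case True
      with False obtain x where x: "x \<in> B m" "\<not> l_homogeneous_pair n E l x (t+1)" by blast
      have "B m \<subseteq> {1..t}"
        using ordered_homogeneous_partitionD(3)[OF part] True by auto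
      then have "1 \<le> x" "x < t+1" using x(1) by auto
      then obtain z where "distinguishes z x (t+1)"
        using distinguishes_if_not_homogeneous[OF x(2)] Suc.prems by auto
      with x(1) show thesis by (intro that) simp
    qed (rule that, simp)
    let ?B = "B(m+1 := {t+1})" and ?X = "X(m := x)" and ?Y = "Y(m := t+1)" and ?Z = "Z(m := z)"
    have "ordered_homogeneous_partition (Suc t) (m+1) ?B"
      using ordered_homogeneous_partition_snoc[OF part] by simp
    moreover have "\<forall>i\<in>{1..<m+1}. distinguishes (?Z i) (?X i) (?Y i) \<and> ?X i \<in> ?B i \<and> ?Y i \<in> ?B (i+1)"
    proof
      fix i assume i: "i \<in> {1..<m+1}"
      show "distinguishes (?Z i) (?X i) (?Y i) \<and> ?X i \<in> ?B i \<and> ?Y i \<in> ?B (i+1)"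
      proof (cases "i = m")
        case True
        then show ?thesis using xz i by simp
      next
        case False
        then show ?thesis using wit i by simp
      qed
    qed
    ultimately show ?thesis by blast
  qed
qed

context
  fixes k :: nat
  assumes k_pos: "1 \<le> k"
begin

lemma has_type1_of_common_vertex:
  assumes sep: "separated_witnesses X Y Z {1..2*k}" and common: "\<forall>i\<in>{1..2*k}. Z i = z"
    and outside: "z < X 1 \<or> Y (2*k) < z"
  shows "has_type1 n E k"
proof -
  define p where "p i = pick (Z i) (X i) (Y i) (odd i)" for i
  have ends: "1 \<in> {1..2*k}" "2*k \<in> {1..2*k}" using k_pos by auto
  show ?thesis
  proof (rule has_type1I[where xs = p])
    show "z \<in> {1..n}" using separated_witnesses_pick(2)[OF sep ends(1)] common ends(1) by simp
    show "\<forall>i\<in>{1..2*k}. p i \<in> {1..n} \<and> (E z (p i) \<longleftrightarrow> odd i)"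
    proof
      fix i assume i: "i \<in> {1..2*k}"
      have "p i \<in> {1..n} \<and> (E (Z i) (p i) \<longleftrightarrow> odd i)"
        unfolding p_def by (intro conjI separated_witnesses_pick[OF sep i])
      then show "p i \<in> {1..n} \<and> (E z (p i) \<longleftrightarrow> odd i)" using common i by simp
    qed
    show "\<forall>i\<in>{1..<2*k}. p i < p (i+1)"
      unfolding p_def by (simp add: separated_witnesses_pick_less[OF sep])
    have "X 1 \<le> p 1" "p (2*k) \<le> Y (2*k)"
      unfolding p_def using separated_witnesses_pick(5,6)[OF sep] ends by blast+
    then show "z < p 1 \<or> p (2*k) < z" using outside by linarith
  qed
qed

lemma has_type2_of_monotone_right:
  assumes sep: "separated_witnesses X Y Z {1..2*k}" and right: "\<forall>i\<in>{1..2*k}. Y (2*k) < Z i"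
    and mono: "(\<forall>i\<in>{1..<2*k}. Z i < Z (i+1)) \<or> (\<forall>i\<in>{1..<2*k}. Z (i+1) < Z i)"
  shows "has_type2 n E k"
proof -
  define p where "p i = pick (Z i) (X i) (Y i) (odd i)" for i
  have ends: "1 \<in> {1..2*k}" "2*k \<in> {1..2*k}" using k_pos by auto
  have pairs: "\<forall>i\<in>{1..2*k}. p i \<in> {1..n} \<and> Z i \<in> {1..n} \<and> (E (p i) (Z i) \<longleftrightarrow> odd i)"
  proof
    fix i assume i: "i \<in> {1..2*k}"
    show "p i \<in> {1..n} \<and> Z i \<in> {1..n} \<and> (E (p i) (Z i) \<longleftrightarrow> odd i)"
      unfolding p_def by (intro conjI separated_witnesses_pick[OF sep i])
  qed
  have p_incr: "\<forall>i\<in>{1..<2*k}. p i < p (i+1)"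
    unfolding p_def by (simp add: separated_witnesses_pick_less[OF sep])
  have p_last: "p (2*k) < Z i" if "i \<in> {1..2*k}" for i
  proof -
    have "Y (2*k) < Z i" using right that by blast
    with separated_witnesses_pick(6)[OF sep ends(2)] show ?thesis
      unfolding p_def by (rule le_less_trans)
  qed
  from mono show ?thesis
  proof
    assume "\<forall>i\<in>{1..<2*k}. Z i < Z (i+1)"
    with p_incr have "\<forall>i\<in>{1..<2*k}. p i < p (i+1) \<and> Z i < Z (i+1)" by blast
    from pairs this p_last[OF ends(1)] show ?thesis by (rule has_type2aI)
  next
    assume "\<forall>i\<in>{1..<2*k}. Z (i+1) < Z i"
    with p_incr have "\<forall>i\<in>{1..<2*k}. p i < p (i+1) \<and> Z (i+1) < Z i" by blast
    from pairs this p_last[OF ends(2)] show ?thesis by (rule has_type2bI)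
  qed
qed

lemma has_type2_of_monotone_left:
  assumes sep: "separated_witnesses X Y Z {1..2*k}" and left: "\<forall>i\<in>{1..2*k}. Z i < X 1"
    and mono: "(\<forall>i\<in>{1..<2*k}. Z i < Z (i+1)) \<or> (\<forall>i\<in>{1..<2*k}. Z (i+1) < Z i)"
  shows "has_type2 n E k"
proof -
  define p where "p i b = pick (Z i) (X i) (Y i) b" for i b
  have ends: "1 \<in> {1..2*k}" "2*k \<in> {1..2*k}" using k_pos by auto
  have pair: "Z i \<in> {1..n} \<and> p i b \<in> {1..n} \<and> (E (Z i) (p i b) \<longleftrightarrow> b)"
    if "i \<in> {1..2*k}" for i b
    unfolding p_def by (intro conjI separated_witnesses_pick[OF sep that])
  have p_less: "p i b < p j b'" if "i \<in> {1..2*k}" "j \<in> {1..2*k}" "i < j" for i j b b'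
    unfolding p_def using separated_witnesses_pick_less[OF sep that] .
  have Z_first: "Z i < p 1 b" if "i \<in> {1..2*k}" for i b
  proof -
    have "Z i < X 1" using left that by blast
    then show ?thesis
      unfolding p_def using separated_witnesses_pick(5)[OF sep ends(1)] by (rule less_le_trans)
  qed
  from mono show ?thesis
  proof
    assume incr: "\<forall>i\<in>{1..<2*k}. Z i < Z (i+1)"
    show ?thesis
    proof (rule has_type2aI[where xs = Z and ys = "\<lambda>i. p i (odd i)"])
      show "\<forall>i\<in>{1..2*k}. Z i \<in> {1..n} \<and> p i (odd i) \<in> {1..n} \<and> (E (Z i) (p i (odd i)) \<longleftrightarrow> odd i)"
        by (intro ballI pair)
      show "\<forall>i\<in>{1..<2*k}. Z i < Z (i+1) \<and> p i (odd i) < p (i+1) (odd (i+1))"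
      proof
        fix i assume "i \<in> {1..<2*k}"
        then show "Z i < Z (i+1) \<and> p i (odd i) < p (i+1) (odd (i+1))"
          using incr by (auto intro: p_less)
      qed
      show "Z (2*k) < p 1 (odd 1)" using Z_first[OF ends(2)] .
    qed
  next
    assume decr: "\<forall>i\<in>{1..<2*k}. Z (i+1) < Z i"
    \<comment> \<open>reversing the order makes the decreasing \<open>Z\<close> the increasing side of a Type 2(b)\<close>
    define r where "r i = 2*k + 1 - i" for i
    have r_mem: "r i \<in> {1..2*k}" if "i \<in> {1..2*k}" for i
      using that unfolding r_def by auto
    have r_Suc: "r i = r (i+1) + 1" "r (i+1) \<in> {1..<2*k}" if "i \<in> {1..<2*k}" for i
      using that unfolding r_def by auto
    show ?thesis
    proof (rule has_type2bI[where xs = "\<lambda>i. Z (r i)" and ys = "\<lambda>i. p (r i) (odd i)"])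
      show "\<forall>i\<in>{1..2*k}. Z (r i) \<in> {1..n} \<and> p (r i) (odd i) \<in> {1..n}
          \<and> (E (Z (r i)) (p (r i) (odd i)) \<longleftrightarrow> odd i)"
      proof
        fix i assume "i \<in> {1..2*k}"
        then show "Z (r i) \<in> {1..n} \<and> p (r i) (odd i) \<in> {1..n}
          \<and> (E (Z (r i)) (p (r i) (odd i)) \<longleftrightarrow> odd i)" by (intro pair r_mem)
      qed
      show "\<forall>i\<in>{1..<2*k}. Z (r i) < Z (r (i+1)) \<and> p (r (i+1)) (odd (i+1)) < p (r i) (odd i)"
      proof
        fix i assume i: "i \<in> {1..<2*k}"
        then have "Z (r (i+1) + 1) < Z (r (i+1))" using decr r_Suc(2) by blast
        moreover have "p (r (i+1)) (odd (i+1)) < p (r i) (odd i)"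
          using i r_Suc by (intro p_less r_mem) auto
        ultimately show "Z (r i) < Z (r (i+1)) \<and> p (r (i+1)) (odd (i+1)) < p (r i) (odd i)"
          using r_Suc(1)[OF i] by simp
      qed
      show "Z (r (2*k)) < p (r (2*k)) (odd (2*k))"
        using Z_first[OF ends(1)] by (simp add: r_def)
    qed
  qed
qed

lemma has_type3_of_separated_hulls:
  assumes wit: "\<forall>i\<in>{1..2*k}. distinguishes (Z i) (X i) (Y i)"
    and hulls: "\<forall>i\<in>{1..<2*k}. max (Y i) (Z i) < min (X (i+1)) (Z (i+1))"
  shows "has_type3 n E k l"
proof -
  define p where "p i = pick (Z i) (X i) (Y i) (odd i)" for i
  show ?thesis
  proof (rule has_type3I[where xs = "\<lambda>i. min (p i) (Z i)" and ys = "\<lambda>i. max (p i) (Z i)", OF l_pos])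
    show "\<forall>i\<in>{1..2*k}. 1 \<le> min (p i) (Z i) \<and> min (p i) (Z i) + l \<le> max (p i) (Z i)
        \<and> max (p i) (Z i) \<le> n \<and> (E (min (p i) (Z i)) (max (p i) (Z i)) \<longleftrightarrow> odd i)"
    proof
      fix i assume "i \<in> {1..2*k}"
      then have "distinguishes (Z i) (X i) (Y i)" using wit by blast
      then show "1 \<le> min (p i) (Z i) \<and> min (p i) (Z i) + l \<le> max (p i) (Z i)
        \<and> max (p i) (Z i) \<le> n \<and> (E (min (p i) (Z i)) (max (p i) (Z i)) \<longleftrightarrow> odd i)"
        unfolding p_def by (intro conjI distinguishes_pick_pair)
    qed
    show "\<forall>i\<in>{1..<2*k}. max (p i) (Z i) < min (p (i+1)) (Z (i+1))"
    proof
      fix i assume i: "i \<in> {1..<2*k}"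
      then have "i \<in> {1..2*k}" "i + 1 \<in> {1..2*k}" by auto
      then have "p i \<le> Y i" "X (i+1) \<le> p (i+1)"
        using wit distinguishes_pick(2,3) unfolding p_def by blast+
      moreover have "max (Y i) (Z i) < min (X (i+1)) (Z (i+1))" using hulls i by blast
      ultimately show "max (p i) (Z i) < min (p (i+1)) (Z (i+1))" by simp
    qed
  qed
qed

lemma has_type2_or_type3_of_increasing_right:
  assumes sep: "separated_witnesses X Y Z {1..2*k*(2*k)}"
    and right: "\<forall>i\<in>{1..2*k*(2*k)}. Y i < Z i" and incr: "strict_mono_on {1..2*k*(2*k)} Z"
  shows "has_type2 n E k \<or> has_type3 n E k l"
proof -
  define block where "block t i = 2*k*(t-1) + i" for t i
  have block_mem: "block t i \<in> {1..2*k*(2*k)}" if "t \<in> {1..2*k}" "i \<in> {1..2*k}" for t i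
    unfolding block_def using block_index_mem[OF that] .
  have next_block: "block (t+1) 1 = block t (2*k) + 1" if "1 \<le> t" for t
    using that unfolding block_def by (cases t) auto
  have ends: "1 \<in> {1..2*k}" "2*k \<in> {1..2*k}" using k_pos by auto
  show ?thesis
  proof (cases "\<exists>t\<in>{1..2*k}. Y (block t (2*k)) < Z (block t 1)")
    case True
    then obtain t where t: "t \<in> {1..2*k}" "Y (block t (2*k)) < Z (block t 1)" by blast
    have block_mono: "strict_mono_on {1..2*k} (block t)"
      unfolding block_def by (rule strict_mono_onI) simp
    have block_range: "block t ` {1..2*k} \<subseteq> {1..2*k*(2*k)}"
      using block_mem[OF t(1)] by blast
    note c = block_mono block_range
    have incr_c: "strict_mono_on {1..2*k} (Z \<circ> block t)"
      using monotone_on_o[OF incr c(1,2)] .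
    have "has_type2 n E k"
    proof (rule has_type2_of_monotone_right[OF separated_witnesses_comp[OF sep c]])
      show "\<forall>i\<in>{1..2*k}. (Y \<circ> block t) (2*k) < (Z \<circ> block t) i"
      proof
        fix i assume "i \<in> {1..2*k}"
        then have "(Z \<circ> block t) 1 \<le> (Z \<circ> block t) i"
          using ends(1) by (intro strict_mono_on_leD[OF incr_c]) auto
        then show "(Y \<circ> block t) (2*k) < (Z \<circ> block t) i" using t(2) by simp
      qed
      show "(\<forall>i\<in>{1..<2*k}. (Z \<circ> block t) i < (Z \<circ> block t) (i+1))
          \<or> (\<forall>i\<in>{1..<2*k}. (Z \<circ> block t) (i+1) < (Z \<circ> block t) i)"
        using strict_mono_on_Suc[OF incr_c] by blast
    qed
    then show ?thesis ..
  next
    case False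
    define f where "f t = block t 1" for t
    have "has_type3 n E k l"
    proof (rule has_type3_of_separated_hulls[where X = "X \<circ> f" and Y = "Y \<circ> f" and Z = "Z \<circ> f"])
      show "\<forall>t\<in>{1..2*k}. distinguishes ((Z \<circ> f) t) ((X \<circ> f) t) ((Y \<circ> f) t)"
      proof
        fix t assume "t \<in> {1..2*k}"
        then show "distinguishes ((Z \<circ> f) t) ((X \<circ> f) t) ((Y \<circ> f) t)"
          unfolding f_def comp_def by (intro separated_witnessesD(1)[OF sep] block_mem ends(1))
      qed
      show "\<forall>t\<in>{1..<2*k}. max ((Y \<circ> f) t) ((Z \<circ> f) t) < min ((X \<circ> f) (t+1)) ((Z \<circ> f) (t+1))"
      proof
        fix t assume "t \<in> {1..<2*k}"
        then have t: "t \<in> {1..2*k}" "t + 1 \<in> {1..2*k}" by auto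
        have first: "f t \<in> {1..2*k*(2*k)}" "f (t+1) \<in> {1..2*k*(2*k)}"
          unfolding f_def using block_mem[OF t(1) ends(1)] block_mem[OF t(2) ends(1)] .
        have last: "block t (2*k) \<in> {1..2*k*(2*k)}" using block_mem[OF t(1) ends(2)] .
        have "X (f (t+1)) < Y (f (t+1))" using separated_witnessesD(2)[OF sep first(2)] .
        moreover have "Y (f (t+1)) < Z (f (t+1))" "Y (f t) < Z (f t)" using right first by blast+
        moreover have "\<not> Y (block t (2*k)) < Z (f t)" using False t(1) unfolding f_def by blast
        moreover have "Y (block t (2*k)) < X (f (t+1))"
          using separated_witnesses_less[OF sep last first(2)] next_block[of t] t(1)
          unfolding f_def by simp
        ultimately show "max ((Y \<circ> f) t) ((Z \<circ> f) t) < min ((X \<circ> f) (t+1)) ((Z \<circ> f) (t+1))"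
          by simp
      qed
    qed
    then show ?thesis ..
  qed
qed

lemma has_type2_or_type3_of_increasing_left:
  assumes sep: "separated_witnesses X Y Z {1..2*k*(2*k)}"
    and left: "\<forall>i\<in>{1..2*k*(2*k)}. Z i < X i" and incr: "strict_mono_on {1..2*k*(2*k)} Z"
  shows "has_type2 n E k \<or> has_type3 n E k l"
proof -
  define block where "block t i = 2*k*(t-1) + i" for t i
  have block_mem: "block t i \<in> {1..2*k*(2*k)}" if "t \<in> {1..2*k}" "i \<in> {1..2*k}" for t i
    unfolding block_def using block_index_mem[OF that] .
  have next_block: "block (t+1) 1 = block t (2*k) + 1" if "1 \<le> t" for t
    using that unfolding block_def by (cases t) auto
  have ends: "1 \<in> {1..2*k}" "2*k \<in> {1..2*k}" using k_pos by auto
  show ?thesis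
  proof (cases "\<exists>t\<in>{1..2*k}. Z (block t (2*k)) < X (block t 1)")
    case True
    then obtain t where t: "t \<in> {1..2*k}" "Z (block t (2*k)) < X (block t 1)" by blast
    have block_mono: "strict_mono_on {1..2*k} (block t)"
      unfolding block_def by (rule strict_mono_onI) simp
    have block_range: "block t ` {1..2*k} \<subseteq> {1..2*k*(2*k)}"
      using block_mem[OF t(1)] by blast
    note c = block_mono block_range
    have incr_c: "strict_mono_on {1..2*k} (Z \<circ> block t)"
      using monotone_on_o[OF incr c(1,2)] .
    have "has_type2 n E k"
    proof (rule has_type2_of_monotone_left[OF separated_witnesses_comp[OF sep c]])
      show "\<forall>i\<in>{1..2*k}. (Z \<circ> block t) i < (X \<circ> block t) 1"
      proof
        fix i assume "i \<in> {1..2*k}"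
        then have "(Z \<circ> block t) i \<le> (Z \<circ> block t) (2*k)"
          using ends(2) by (intro strict_mono_on_leD[OF incr_c]) auto
        then show "(Z \<circ> block t) i < (X \<circ> block t) 1" using t(2) by simp
      qed
      show "(\<forall>i\<in>{1..<2*k}. (Z \<circ> block t) i < (Z \<circ> block t) (i+1))
          \<or> (\<forall>i\<in>{1..<2*k}. (Z \<circ> block t) (i+1) < (Z \<circ> block t) i)"
        using strict_mono_on_Suc[OF incr_c] by blast
    qed
    then show ?thesis ..
  next
    case False
    define g where "g t = block t (2*k)" for t
    have "has_type3 n E k l"
    proof (rule has_type3_of_separated_hulls[where X = "X \<circ> g" and Y = "Y \<circ> g" and Z = "Z \<circ> g"])
      show "\<forall>t\<in>{1..2*k}. distinguishes ((Z \<circ> g) t) ((X \<circ> g) t) ((Y \<circ> g) t)"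
      proof
        fix t assume "t \<in> {1..2*k}"
        then show "distinguishes ((Z \<circ> g) t) ((X \<circ> g) t) ((Y \<circ> g) t)"
          unfolding g_def comp_def by (intro separated_witnessesD(1)[OF sep] block_mem ends(2))
      qed
      show "\<forall>t\<in>{1..<2*k}. max ((Y \<circ> g) t) ((Z \<circ> g) t) < min ((X \<circ> g) (t+1)) ((Z \<circ> g) (t+1))"
      proof
        fix t assume "t \<in> {1..<2*k}"
        then have t: "t \<in> {1..2*k}" "t + 1 \<in> {1..2*k}" by auto
        have last: "g t \<in> {1..2*k*(2*k)}" "g (t+1) \<in> {1..2*k*(2*k)}"
          unfolding g_def using block_mem[OF t(1) ends(2)] block_mem[OF t(2) ends(2)] .
        have first: "block (t+1) 1 \<in> {1..2*k*(2*k)}" using block_mem[OF t(2) ends(1)] .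
        have "X (g t) < Y (g t)" using separated_witnessesD(2)[OF sep last(1)] .
        moreover have "Z (g t) < X (g t)" "Z (g (t+1)) < X (g (t+1))" using left last by blast+
        moreover have "Y (g t) < X (block (t+1) 1)"
          using separated_witnesses_less[OF sep last(1) first] next_block[of t] t(1)
          unfolding g_def by simp
        moreover have "\<not> Z (g (t+1)) < X (block (t+1) 1)" using False t(2) unfolding g_def by blast
        ultimately show "max ((Y \<circ> g) t) ((Z \<circ> g) t) < min ((X \<circ> g) (t+1)) ((Z \<circ> g) (t+1))"
          by simp
      qed
    qed
    then show ?thesis ..
  qed
qed

context
  assumes no_type1: "\<not> has_type1 n E k" and no_type2: "\<not> has_type2 n E k"
    and no_type3: "\<not> has_type3 n E k l"
begin

lemma card_inner_witnesses_less:
  assumes sep: "separated_witnesses X Y Z T" and fin: "finite T"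
    and inner: "\<forall>i\<in>T. X i < Z i \<and> Z i < Y i"
  shows "card T < 2*k"
proof (rule ccontr)
  assume "\<not> card T < 2*k"
  then have "2*k \<le> card T" by simp
  then obtain c where "strict_mono_on {1..2*k} c" and c: "c ` {1..2*k} \<subseteq> T"
    and sep_c: "separated_witnesses (X \<circ> c) (Y \<circ> c) (Z \<circ> c) {1..2*k}"
    by (rule obtain_separated_subchain[OF sep subset_refl fin])
  have "has_type3 n E k l"
  proof (rule has_type3_of_separated_hulls[where X = "X \<circ> c" and Y = "Y \<circ> c" and Z = "Z \<circ> c"])
    show "\<forall>i\<in>{1..2*k}. distinguishes ((Z \<circ> c) i) ((X \<circ> c) i) ((Y \<circ> c) i)"
      using separated_witnessesD(1)[OF sep_c] by blast
    show "\<forall>i\<in>{1..<2*k}. max ((Y \<circ> c) i) ((Z \<circ> c) i) < min ((X \<circ> c) (i+1)) ((Z \<circ> c) (i+1))"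
    proof
      fix i assume "i \<in> {1..<2*k}"
      then have i: "i \<in> {1..2*k}" "i + 1 \<in> {1..2*k}" "i < i + 1" by auto
      then have "c i \<in> T" "c (i+1) \<in> T" using c by auto
      then have "Z (c i) < Y (c i)" "X (c (i+1)) < Z (c (i+1))" using inner by auto
      moreover have "Y (c i) < X (c (i+1))" using separated_witnesses_less[OF sep_c i] by simp
      ultimately show "max ((Y \<circ> c) i) ((Z \<circ> c) i) < min ((X \<circ> c) (i+1)) ((Z \<circ> c) (i+1))"
        by simp
    qed
  qed
  with no_type3 show False ..
qed

lemma card_outer_witnesses_le:
  assumes sep: "separated_witnesses X Y Z T" and fin: "finite T"
    and side: "(\<forall>i\<in>T. Y i < Z i) \<or> (\<forall>i\<in>T. Z i < X i)"
  shows "card T \<le> 16 * k^4"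
proof -
  have ends: "1 \<in> {1..2*k}" "2*k \<in> {1..2*k}" using k_pos by auto
  have side_sub: "(\<forall>i\<in>J. Y (c i) < Z (c i)) \<or> (\<forall>i\<in>J. Z (c i) < X (c i))"
    if cJ: "c ` J \<subseteq> T" for c J
  proof -
    have in_T: "c i \<in> T" if "i \<in> J" for i using cJ that by blast
    from side show ?thesis
    proof
      assume "\<forall>i\<in>T. Y i < Z i"
      then show ?thesis using in_T by simp
    next
      assume "\<forall>i\<in>T. Z i < X i"
      then show ?thesis using in_T by simp
    qed
  qed
  have "card T \<le> 2*k * (2*k*(2*k)) * (2*k)"
  proof (rule card_le_by_monotone_subsets[OF fin])
    fix C assume C: "C \<subseteq> T" "\<forall>i\<in>C. \<forall>j\<in>C. Z i = Z j"
    show "card C \<le> 2*k"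
    proof (rule ccontr)
      assume "\<not> card C \<le> 2*k"
      then have "2*k \<le> card C" by simp
      then obtain c where "strict_mono_on {1..2*k} c" and c: "c ` {1..2*k} \<subseteq> C"
        and sep_c: "separated_witnesses (X \<circ> c) (Y \<circ> c) (Z \<circ> c) {1..2*k}"
        by (rule obtain_separated_subchain[OF sep C(1) finite_subset[OF C(1) fin]])
      have side_c: "(\<forall>i\<in>{1..2*k}. Y (c i) < Z (c i)) \<or> (\<forall>i\<in>{1..2*k}. Z (c i) < X (c i))"
        by (rule side_sub[OF subset_trans[OF c C(1)]])
      have common: "\<forall>i\<in>{1..2*k}. (Z \<circ> c) i = Z (c 1)"
      proof
        fix i assume "i \<in> {1..2*k}"
        then have "c i \<in> C" "c 1 \<in> C" using c ends(1) by auto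
        then show "(Z \<circ> c) i = Z (c 1)" unfolding comp_def using C(2) by blast
      qed
      from side_c have "Z (c 1) < (X \<circ> c) 1 \<or> (Y \<circ> c) (2*k) < Z (c 1)"
      proof
        assume "\<forall>i\<in>{1..2*k}. Y (c i) < Z (c i)"
        then have "Y (c (2*k)) < Z (c (2*k))" using ends(2) by blast
        moreover have "Z (c (2*k)) = Z (c 1)" using bspec[OF common ends(2)] by simp
        ultimately show ?thesis by simp
      next
        assume "\<forall>i\<in>{1..2*k}. Z (c i) < X (c i)"
        then show ?thesis using ends(1) by simp
      qed
      then have "has_type1 n E k" by (rule has_type1_of_common_vertex[OF sep_c common])
      with no_type1 show False ..
    qed
  next
    fix C assume C: "C \<subseteq> T" "strict_mono_on C Z"
    show "card C \<le> 2*k*(2*k)"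
    proof (rule ccontr)
      assume "\<not> card C \<le> 2*k*(2*k)"
      then have "2*k*(2*k) \<le> card C" by simp
      then obtain c where c: "strict_mono_on {1..2*k*(2*k)} c" "c ` {1..2*k*(2*k)} \<subseteq> C"
        and sep_c: "separated_witnesses (X \<circ> c) (Y \<circ> c) (Z \<circ> c) {1..2*k*(2*k)}"
        by (rule obtain_separated_subchain[OF sep C(1) finite_subset[OF C(1) fin]])
      have side_c: "(\<forall>i\<in>{1..2*k*(2*k)}. Y (c i) < Z (c i))
          \<or> (\<forall>i\<in>{1..2*k*(2*k)}. Z (c i) < X (c i))"
        by (rule side_sub[OF subset_trans[OF c(2) C(1)]])
      have incr: "strict_mono_on {1..2*k*(2*k)} (Z \<circ> c)"
        using monotone_on_o[OF C(2) c] .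
      from side_c have "has_type2 n E k \<or> has_type3 n E k l"
      proof
        assume "\<forall>i\<in>{1..2*k*(2*k)}. Y (c i) < Z (c i)"
        then have "\<forall>i\<in>{1..2*k*(2*k)}. (Y \<circ> c) i < (Z \<circ> c) i" by simp
        then show ?thesis by (rule has_type2_or_type3_of_increasing_right[OF sep_c _ incr])
      next
        assume "\<forall>i\<in>{1..2*k*(2*k)}. Z (c i) < X (c i)"
        then have "\<forall>i\<in>{1..2*k*(2*k)}. (Z \<circ> c) i < (X \<circ> c) i" by simp
        then show ?thesis by (rule has_type2_or_type3_of_increasing_left[OF sep_c _ incr])
      qed
      with no_type2 no_type3 show False by blast
    qed
  next
    fix C assume C: "C \<subseteq> T" "strict_antimono_on C Z"
    show "card C \<le> 2*k"
    proof (rule ccontr)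
      assume "\<not> card C \<le> 2*k"
      then have "2*k \<le> card C" by simp
      then obtain c where c: "strict_mono_on {1..2*k} c" "c ` {1..2*k} \<subseteq> C"
        and sep_c: "separated_witnesses (X \<circ> c) (Y \<circ> c) (Z \<circ> c) {1..2*k}"
        by (rule obtain_separated_subchain[OF sep C(1) finite_subset[OF C(1) fin]])
      have side_c: "(\<forall>i\<in>{1..2*k}. Y (c i) < Z (c i)) \<or> (\<forall>i\<in>{1..2*k}. Z (c i) < X (c i))"
        by (rule side_sub[OF subset_trans[OF c(2) C(1)]])
      have decr: "strict_antimono_on {1..2*k} (Z \<circ> c)"
        using monotone_on_o[OF C(2) c] .
      have mono: "(\<forall>i\<in>{1..<2*k}. (Z \<circ> c) i < (Z \<circ> c) (i+1))
          \<or> (\<forall>i\<in>{1..<2*k}. (Z \<circ> c) (i+1) < (Z \<circ> c) i)"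
        using strict_antimono_on_Suc[OF decr] by blast
      from side_c have "has_type2 n E k"
      proof
        assume right: "\<forall>i\<in>{1..2*k}. Y (c i) < Z (c i)"
        have "(Y \<circ> c) (2*k) < (Z \<circ> c) i" if "i \<in> {1..2*k}" for i
        proof -
          have "(Z \<circ> c) (2*k) \<le> (Z \<circ> c) i"
            using strict_antimono_on_leD[OF decr that ends(2)] that by simp
          moreover have "Y (c (2*k)) < Z (c (2*k))" using right ends(2) by blast
          ultimately show ?thesis by simp
        qed
        then show ?thesis by (intro has_type2_of_monotone_right[OF sep_c _ mono] ballI)
      next
        assume left: "\<forall>i\<in>{1..2*k}. Z (c i) < X (c i)"
        have "(Z \<circ> c) i < (X \<circ> c) 1" if "i \<in> {1..2*k}" for i
        proof -
          have "(Z \<circ> c) i \<le> (Z \<circ> c) 1"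
            using strict_antimono_on_leD[OF decr ends(1) that] that by simp
          moreover have "Z (c 1) < X (c 1)" using left ends(1) by blast
          ultimately show ?thesis by simp
        qed
        then show ?thesis by (intro has_type2_of_monotone_left[OF sep_c _ mono] ballI)
      qed
      with no_type2 show False ..
    qed
  qed
  also have "\<dots> = 16 * k^4" by (simp add: power4_eq_xxxx mult_ac)
  finally show ?thesis .
qed

lemma card_separated_witnesses_le:
  assumes sep: "separated_witnesses X Y Z T" and fin: "finite T"
  shows "card T \<le> 2*k + 32 * k^4"
proof -
  let ?inner = "{i \<in> T. X i < Z i \<and> Z i < Y i}"
  let ?right = "{i \<in> T. Y i < Z i}"
  let ?left = "{i \<in> T. Z i < X i}"
  have "T \<subseteq> ?inner \<union> ?right \<union> ?left"
  proof
    fix i assume i: "i \<in> T"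
    then have "Z i \<noteq> X i" "Z i \<noteq> Y i"
      using distinguishes_neq separated_witnessesD(1)[OF sep i] by simp_all
    with i show "i \<in> ?inner \<union> ?right \<union> ?left" by auto
  qed
  then have "card T \<le> card (?inner \<union> ?right \<union> ?left)"
    by (rule card_mono[rotated]) (use fin in simp)
  also have "\<dots> \<le> card ?inner + card ?right + card ?left"
    by (meson card_Un_le add_le_mono1 order_trans)
  also have "\<dots> \<le> 2*k + 16 * k^4 + 16 * k^4"
  proof -
    have sub: "separated_witnesses X Y Z S" "finite S" if "S \<subseteq> T" for S
      using separated_witnesses_subset[OF sep that] finite_subset[OF that fin] by simp_all
    have "card ?inner < 2*k" by (rule card_inner_witnesses_less[OF sub]) auto
    moreover have "card ?right \<le> 16 * k^4" by (rule card_outer_witnesses_le[OF sub]) auto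
    moreover have "card ?left \<le> 16 * k^4" by (rule card_outer_witnesses_le[OF sub]) auto
    ultimately show ?thesis by linarith
  qed
  finally show ?thesis by simp
qed

lemma card_witnesses_less:
  assumes wit: "\<forall>i\<in>{1..r}. distinguishes (Z i) (X i) (Y i)"
    and gap: "\<forall>i\<in>{1..r}. \<forall>j\<in>{1..r}. i + 1 < j \<longrightarrow> Y i < X j"
  shows "r < 256 * k^4"
proof -
  let ?parity = "\<lambda>b. {i \<in> {1..r}. even i = b}"
  have "separated_witnesses X Y Z (?parity b)" for b
    unfolding separated_witnesses_def
  proof (intro conjI ballI impI)
    fix i assume "i \<in> ?parity b"
    then show "distinguishes (Z i) (X i) (Y i)" using wit by simp
  next
    fix i j assume ij: "i \<in> ?parity b" "j \<in> ?parity b" "i < j"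
    then have "i + 1 < j" by (cases "j = i + 1") auto
    then show "Y i < X j" using gap ij by simp
  qed
  then have parity_le: "card (?parity b) \<le> 2*k + 32 * k^4" for b
    by (rule card_separated_witnesses_le) simp
  have "?parity True \<union> ?parity False = {1..r}" by auto
  then have "r = card (?parity True \<union> ?parity False)" by simp
  also have "\<dots> \<le> card (?parity True) + card (?parity False)" by (rule card_Un_le)
  also have "\<dots> \<le> 4*k + 64 * k^4" using parity_le[of True] parity_le[of False] by linarith
  also have "\<dots> < 256 * k^4"
  proof -
    have "k \<le> k^4" using k_pos by (simp add: self_le_power)
    moreover have "1 \<le> k^4" using k_pos by simp
    ultimately show ?thesis by linarith
  qed
  finally show ?thesis .
qed

lemma bounded_homogeneous_partition:
  "\<exists>m B. m \<le> 256 * k ^ 4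
     \<and> (\<forall>i\<in>{1..m}. B i \<noteq> {} \<and> consecutive (B i) \<and> l_homogeneous_set n E l (B i))
     \<and> (\<forall>i\<in>{1..m}. \<forall>j\<in>{1..m}. i < j \<longrightarrow> set_less (B i) (B j))
     \<and> (\<Union>i\<in>{1..m}. B i) = {1..n}"
proof -
  obtain m B X Y Z where part: "ordered_homogeneous_partition n m B"
    and wit: "\<forall>i\<in>{1..<m}. distinguishes (Z i) (X i) (Y i) \<and> X i \<in> B i \<and> Y i \<in> B (i+1)"
    using ordered_homogeneous_partition_exists[OF order_refl] by blast
  have "m - 1 < 256 * k^4"
  proof (rule card_witnesses_less)
    show "\<forall>i\<in>{1..m-1}. distinguishes (Z i) (X i) (Y i)" using wit by auto
    show "\<forall>i\<in>{1..m-1}. \<forall>j\<in>{1..m-1}. i + 1 < j \<longrightarrow> Y i < X j"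
    proof (intro ballI impI)
      fix i j assume ij: "i \<in> {1..m-1}" "j \<in> {1..m-1}" "i + 1 < j"
      then have "Y i \<in> B (i+1)" "X j \<in> B j" using wit by auto
      have "i + 1 \<in> {1..m}" "j \<in> {1..m}" using ij by auto
      moreover note ordered_homogeneous_partitionD(2)[OF part]
      ultimately have "set_less (B (i+1)) (B j)" using ij(3) by blast
      with \<open>Y i \<in> B (i+1)\<close> \<open>X j \<in> B j\<close> show "Y i < X j" unfolding set_less_def by blast
    qed
  qed
  then have "m \<le> 256 * k^4" by linarith
  with ordered_homogeneous_partitionD[OF part] show ?thesis
    unfolding l_homogeneous_set_def by blast
qed

end

end

end

theorem lemma3:
  fixes n k l :: nat and E :: "nat \<Rightarrow> nat \<Rightarrow> bool"
  assumes "k \<ge> 1" and "l \<ge> 1"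
    and "ordered_graph n E"
    and "\<not> has_type1 n E k" and "\<not> has_type2 n E k" and "\<not> has_type3 n E k l"
  shows "\<exists>m B. m \<le> 256 * k ^ 4
     \<and> (\<forall>i\<in>{1..m}. B i \<noteq> {} \<and> consecutive (B i) \<and> l_homogeneous_set n E l (B i))
     \<and> (\<forall>i\<in>{1..m}. \<forall>j\<in>{1..m}. i < j \<longrightarrow> set_less (B i) (B j))
     \<and> (\<Union>i\<in>{1..m}. B i) = {1..n}"
proof -
  interpret ordered_graph_scale n E l
    using assms(2,3) by unfold_locales auto
  show ?thesis using bounded_homogeneous_partition[OF assms(1,4,5,6)] .
qed

end
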